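(* The interactive synthesis algorithm terminates after $O((n+m)\cdot|\bar{P}^*|^2)$ iterations, where $|\bar{P}^*|$ is the number of nodes in the AST of the true program $\bar{P}^*$, $n$ is the number of tables in the database, and $m$ is the number of columns in the database.
   Context: Setting: a DSL of database queries given by a context-free grammar with select, project and inner-join operations; holes are either tables in a sequence of inner-joins (nonterminal $I$) or columns (nonterminal $C$). A sketch is a program with holes; a refinement fills holes with grammar expressions; a completion is a refinement with no holes. $\bar{P}^*$ is the true (user-intended) complete program, assumed derivable from the user's initial sketch, and the user oracle answers $\mathcal{O}(Q)=\mathbb{I}[Q\xRightarrow{*}\bar{P}^*]$. The algorithm keeps a current sketch $P$ and a set $\mathcal{N}$ of rejected questions; each iteration it forms the candidate questions (refinements of $P$ filling one hole, and all same-named holes, with a column $c_i$, a table $t_i$, or $t_i\Join_{C,C}I$) minus $\mathcal{N}$, asks the user about one of them $\hat Q$, and sets $P\gets\hat Q$ if accepted, else adds $\hat Q$ to $\mathcal{N}$; it stops when $P$ has no holes. *)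

theory Defs
  imports Main
begin

text \<open>Grammar:
  Q ::= Proj [C,...,C] Q | Sel C op v Q | From I
  I ::= t_i | t_i JOIN_{C,C} I
  C ::= c_i
 Tables t_i and columns c_i are identified by natural-number indices; the
 database has n tables (indices < n) and m columns (indices < m).\<close>

datatype col = Col nat | CHole nat

datatype tbls = Tab nat | Join nat col col tbls | IHole nat

datatype query =
    Proj "col list" query
  | Sel col nat nat query   \<comment> \<open>selection on a column with operator code and constant value\<close>
  | From tbls

fun csize :: "col \<Rightarrow> nat" where
  "csize _ = 1"

fun tsize :: "tbls \<Rightarrow> nat" where
  "tsize (Tab _) = 1"
| "tsize (IHole _) = 1"
| "tsize (Join _ c1 c2 r) = 2 + csize c1 + csize c2 + tsize r"

fun qsize :: "query \<Rightarrow> nat" where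
  "qsize (Proj cs q) = 1 + sum_list (map csize cs) + qsize q"
| "qsize (Sel c _ _ q) = 3 + csize c + qsize q"
| "qsize (From t) = 1 + tsize t"

fun chole_c :: "col \<Rightarrow> nat set" where
  "chole_c (Col _) = {}"
| "chole_c (CHole h) = {h}"

fun chole_t :: "tbls \<Rightarrow> nat set" where
  "chole_t (Tab _) = {}"
| "chole_t (IHole _) = {}"
| "chole_t (Join _ c1 c2 r) = chole_c c1 \<union> chole_c c2 \<union> chole_t r"

fun chole_q :: "query \<Rightarrow> nat set" where
  "chole_q (Proj cs q) = \<Union>(set (map chole_c cs)) \<union> chole_q q"
| "chole_q (Sel c _ _ q) = chole_c c \<union> chole_q q"
| "chole_q (From t) = chole_t t"

fun ihole_t :: "tbls \<Rightarrow> nat set" where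
  "ihole_t (Tab _) = {}"
| "ihole_t (IHole h) = {h}"
| "ihole_t (Join _ _ _ r) = ihole_t r"

fun ihole_q :: "query \<Rightarrow> nat set" where
  "ihole_q (Proj _ q) = ihole_q q"
| "ihole_q (Sel _ _ _ q) = ihole_q q"
| "ihole_q (From t) = ihole_t t"

definition complete :: "query \<Rightarrow> bool" where
  "complete P \<longleftrightarrow> chole_q P = {} \<and> ihole_q P = {}"

definition next_name :: "query \<Rightarrow> nat" where
  "next_name P = Suc (Max (insert 0 (chole_q P \<union> ihole_q P)))"

fun cols_c :: "col \<Rightarrow> nat set" where
  "cols_c (Col i) = {i}"
| "cols_c (CHole _) = {}"

fun cols_t :: "tbls \<Rightarrow> nat set" where
  "cols_t (Tab _) = {}"
| "cols_t (IHole _) = {}"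
| "cols_t (Join _ c1 c2 r) = cols_c c1 \<union> cols_c c2 \<union> cols_t r"

fun cols_q :: "query \<Rightarrow> nat set" where
  "cols_q (Proj cs q) = \<Union>(set (map cols_c cs)) \<union> cols_q q"
| "cols_q (Sel c _ _ q) = cols_c c \<union> cols_q q"
| "cols_q (From t) = cols_t t"

fun tabs_t :: "tbls \<Rightarrow> nat set" where
  "tabs_t (Tab i) = {i}"
| "tabs_t (IHole _) = {}"
| "tabs_t (Join i _ _ r) = insert i (tabs_t r)"

fun tabs_q :: "query \<Rightarrow> nat set" where
  "tabs_q (Proj _ q) = tabs_q q"
| "tabs_q (Sel _ _ _ q) = tabs_q q"
| "tabs_q (From t) = tabs_t t"

definition in_schema :: "nat \<Rightarrow> nat \<Rightarrow> query \<Rightarrow> bool" where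
  "in_schema n m P \<longleftrightarrow> (\<forall>i\<in>tabs_q P. i < n) \<and> (\<forall>j\<in>cols_q P. j < m)"

fun inst_c :: "(nat \<Rightarrow> col) \<Rightarrow> col \<Rightarrow> col" where
  "inst_c sc (Col i) = Col i"
| "inst_c sc (CHole h) = sc h"

fun inst_t :: "(nat \<Rightarrow> col) \<Rightarrow> (nat \<Rightarrow> tbls) \<Rightarrow> tbls \<Rightarrow> tbls" where
  "inst_t sc si (Tab i) = Tab i"
| "inst_t sc si (IHole h) = si h"
| "inst_t sc si (Join i c1 c2 r) = Join i (inst_c sc c1) (inst_c sc c2) (inst_t sc si r)"

fun inst_q :: "(nat \<Rightarrow> col) \<Rightarrow> (nat \<Rightarrow> tbls) \<Rightarrow> query \<Rightarrow> query" where
  "inst_q sc si (Proj cs q) = Proj (map (inst_c sc) cs) (inst_q sc si q)"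
| "inst_q sc si (Sel c op v q) = Sel (inst_c sc c) op v (inst_q sc si q)"
| "inst_q sc si (From t) = From (inst_t sc si t)"

text \<open>Q derives P (Q =>* P): P is obtained from Q by filling its holes, all
  holes with the same name being filled with the same expression.\<close>
definition derives :: "query \<Rightarrow> query \<Rightarrow> bool" where
  "derives Q P \<longleftrightarrow> (\<exists>sc si. inst_q sc si Q = P)"

definition fill_col :: "nat \<Rightarrow> col \<Rightarrow> query \<Rightarrow> query" where
  "fill_col h c P = inst_q (\<lambda>k. if k = h then c else CHole k) IHole P"

definition fill_I :: "nat \<Rightarrow> tbls \<Rightarrow> query \<Rightarrow> query" where
  "fill_I h e P = inst_q CHole (\<lambda>k. if k = h then e else IHole k) P"

definition candidates :: "nat \<Rightarrow> nat \<Rightarrow> query \<Rightarrow> query set" where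
  "candidates n m P =
     {fill_col h (Col i) P | h i. h \<in> chole_q P \<and> i < m}
   \<union> {fill_I h (Tab i) P | h i. h \<in> ihole_q P \<and> i < n}
   \<union> {fill_I h (Join i (CHole (next_name P)) (CHole (Suc (next_name P)))
                       (IHole (Suc (Suc (next_name P))))) P | h i. h \<in> ihole_q P \<and> i < n}"

text \<open>One iteration of the algorithm on state (P, N), user oracle for the
  true program Pstar. The choice of the question is arbitrary
  (nondeterministic). The algorithm stops when P has no holes.\<close>
definition alg_step :: "nat \<Rightarrow> nat \<Rightarrow> query \<Rightarrow> query \<times> query set \<Rightarrow> query \<times> query set \<Rightarrow> bool" where
  "alg_step n m Pstar s s' \<longleftrightarrow>
     (\<not> complete (fst s) \<and>
      (\<exists>Q \<in> candidates n m (fst s) - snd s.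
         s' = (if derives Q Pstar then (Q, snd s) else (fst s, insert Q (snd s)))))"

end

theory Submission
  imports Defs
begin

(*
  A candidate question fills a hole of the sketch with a column, a table or a join, so it
  strictly increases the weight of the sketch, in which every node counts 3 and every hole
  only 2; a sketch deriving the true program P* weighs at most 3 |P*|. Hence at most 3 |P*|
  questions are accepted. Each rejection removes one of the at most |P*| (m + 2 n) open
  candidates of the current sketch, so the lexicographic potential below bounds the number
  of iterations by O((n + m) |P*|^2). The algorithm cannot get stuck before the sketch is
  complete: the current sketch always derives P*, and the value of any of its holes in P*
  yields a candidate deriving P*, which therefore has never been rejected.
*)

lemma sum_list_strict_mono_ex1:
  fixes f g :: "'a \<Rightarrow> 'b::ordered_cancel_comm_monoid_add"
  assumes "\<forall>x\<in>set xs. f x \<le> g x" and "\<exists>x\<in>set xs. f x < g x"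
  shows "sum_list (map f xs) < sum_list (map g xs)"
  using assms by (induction xs) (auto intro: add_less_le_mono add_le_less_mono sum_list_mono)

lemma card_Union_list_le: "card (\<Union>(set (map f xs))) \<le> sum_list (map (card \<circ> f) xs)"
  by (induction xs) (auto intro: order_trans[OF card_Un_le])

lemma inst_c_inst_c: "inst_c sc (inst_c sc' c) = inst_c (inst_c sc \<circ> sc') c"
  by (cases c) auto

lemma inst_t_inst_t:
  "inst_t sc si (inst_t sc' si' t) = inst_t (inst_c sc \<circ> sc') (inst_t sc si \<circ> si') t"
  by (induction t) (auto simp: inst_c_inst_c comp_def)

lemma inst_q_inst_q:
  "inst_q sc si (inst_q sc' si' q) = inst_q (inst_c sc \<circ> sc') (inst_t sc si \<circ> si') q"
  by (induction q) (auto simp: inst_c_inst_c inst_t_inst_t comp_def)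

lemma inst_c_cong: "(\<And>h. h \<in> chole_c c \<Longrightarrow> sc h = sc' h) \<Longrightarrow> inst_c sc c = inst_c sc' c"
  by (cases c) auto

lemma inst_t_cong:
  "(\<And>h. h \<in> chole_t t \<Longrightarrow> sc h = sc' h) \<Longrightarrow> (\<And>h. h \<in> ihole_t t \<Longrightarrow> si h = si' h) \<Longrightarrow>
    inst_t sc si t = inst_t sc' si' t"
  by (induction t) (auto intro: inst_c_cong)

lemma inst_q_cong:
  "(\<And>h. h \<in> chole_q q \<Longrightarrow> sc h = sc' h) \<Longrightarrow> (\<And>h. h \<in> ihole_q q \<Longrightarrow> si h = si' h) \<Longrightarrow>
    inst_q sc si q = inst_q sc' si' q"
  by (induction q) (auto intro: inst_c_cong inst_t_cong)

lemma inst_q_fill_col: "inst_q sc si (fill_col h c P) = inst_q (sc(h := inst_c sc c)) si P"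
  unfolding fill_col_def inst_q_inst_q
  by (rule arg_cong2[where f = "\<lambda>sc si. inst_q sc si P"]) (auto simp: fun_eq_iff)

lemma inst_q_fill_I: "inst_q sc si (fill_I h e P) = inst_q sc (si(h := inst_t sc si e)) P"
  unfolding fill_I_def inst_q_inst_q
  by (rule arg_cong2[where f = "\<lambda>sc si. inst_q sc si P"]) (auto simp: fun_eq_iff)

lemma finite_chole_q: "finite (chole_q q)"
proof -
  have "finite (chole_c c)" for c by (cases c) auto
  moreover from this have "finite (chole_t t)" for t by (induction t) auto
  ultimately show ?thesis by (induction q) auto
qed

lemma finite_ihole_q: "finite (ihole_q q)"
proof -
  have "finite (ihole_t t)" for t by (induction t) auto
  then show ?thesis by (induction q) auto
qed

lemma less_next_name: "h \<in> chole_q P \<union> ihole_q P \<Longrightarrow> h < next_name P"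
  unfolding next_name_def using finite_chole_q finite_ihole_q
  by (simp add: le_imp_less_Suc)

lemma inst_c_chole: "h \<in> chole_c c \<Longrightarrow> inst_c sc c = sc h"
  by (cases c) auto

lemma chole_t_inst: "h \<in> chole_t t \<Longrightarrow> chole_c (sc h) \<subseteq> chole_t (inst_t sc si t)"
  by (induction t) (auto simp: inst_c_chole)

lemma cols_t_inst: "h \<in> chole_t t \<Longrightarrow> cols_c (sc h) \<subseteq> cols_t (inst_t sc si t)"
  by (induction t) (auto simp: inst_c_chole)

lemma chole_q_inst: "h \<in> chole_q q \<Longrightarrow> chole_c (sc h) \<subseteq> chole_q (inst_q sc si q)"
  by (induction q) (force simp: inst_c_chole dest: chole_t_inst[of _ _ sc si])+

lemma cols_q_inst: "h \<in> chole_q q \<Longrightarrow> cols_c (sc h) \<subseteq> cols_q (inst_q sc si q)"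
  by (induction q) (force simp: inst_c_chole dest: cols_t_inst[of _ _ sc si])+

lemma ihole_t_inst:
  "h \<in> ihole_t t \<Longrightarrow> ihole_t (si h) \<subseteq> ihole_t (inst_t sc si t) \<and> tabs_t (si h) \<subseteq> tabs_t (inst_t sc si t)"
  by (induction t) auto

lemma ihole_q_inst:
  "h \<in> ihole_q q \<Longrightarrow> ihole_t (si h) \<subseteq> ihole_q (inst_q sc si q) \<and> tabs_t (si h) \<subseteq> tabs_q (inst_q sc si q)"
  by (induction q) (auto dest: ihole_t_inst)

lemma sum_list_csize: "sum_list (map csize cs) = length cs"
  by (induction cs) simp_all

lemma tsize_pos: "0 < tsize t"
  by (cases t) auto

lemma qsize_inst_mono: "qsize q \<le> qsize (inst_q sc si q)"
proof -
  have "tsize t \<le> tsize (inst_t sc si t)" for t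
    by (induction t) (auto simp: tsize_pos Suc_le_eq)
  then show ?thesis by (induction q) (auto simp: sum_list_csize simp del: map_map)
qed

lemma card_chole_c: "card (chole_c c) \<le> 1"
  by (cases c) auto

lemma card_chole_t: "card (chole_t t) \<le> tsize t"
proof (induction t)
  case (Join i c1 c2 r)
  have "card (chole_t (Join i c1 c2 r)) \<le> card (chole_c c1) + card (chole_c c2) + card (chole_t r)"
    by (auto intro: order_trans[OF card_Un_le] add_mono card_Un_le)
  then show ?case using Join card_chole_c[of c1] card_chole_c[of c2] by simp
qed auto

lemma card_chole_q: "card (chole_q q) \<le> qsize q"
proof (induction q)
  case (Proj cs q)
  have "card (\<Union>(set (map chole_c cs))) \<le> sum_list (map (card \<circ> chole_c) cs)"
    by (rule card_Union_list_le)
  also have "\<dots> \<le> sum_list (map csize cs)"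
    by (rule sum_list_mono) (use card_chole_c in auto)
  finally show ?case using Proj by (auto intro: order_trans[OF card_Un_le])
next
  case (Sel c op v q)
  then show ?case using card_chole_c[of c] by (auto intro: order_trans[OF card_Un_le])
qed (simp add: card_chole_t le_SucI)

lemma card_ihole_q: "card (ihole_q q) \<le> qsize q"
proof -
  have "card (ihole_t t) \<le> tsize t" for t
    by (induction t) auto
  then show ?thesis by (induction q) (auto intro: le_SucI trans_le_add2)
qed

(* weight_q q = 3 * qsize q - (number of hole occurrences in q), computed node by node *)
fun weight_c :: "col \<Rightarrow> nat" where
  "weight_c (Col _) = 3"
| "weight_c (CHole _) = 2"

fun weight_t :: "tbls \<Rightarrow> nat" where
  "weight_t (Tab _) = 3"
| "weight_t (IHole _) = 2"
| "weight_t (Join _ c1 c2 r) = 6 + weight_c c1 + weight_c c2 + weight_t r"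

fun weight_q :: "query \<Rightarrow> nat" where
  "weight_q (Proj cs q) = 3 + sum_list (map weight_c cs) + weight_q q"
| "weight_q (Sel c _ _ q) = 9 + weight_c c + weight_q q"
| "weight_q (From t) = 3 + weight_t t"

lemma weight_c_le: "weight_c c \<le> 3"
  by (cases c) auto

lemma weight_t_le: "weight_t t \<le> 3 * tsize t"
proof (induction t)
  case (Join i c1 c2 r)
  then show ?case using weight_c_le[of c1] weight_c_le[of c2] by simp
qed auto

lemma weight_q_le: "weight_q q \<le> 3 * qsize q"
proof (induction q)
  case (Proj cs q)
  have "sum_list (map weight_c cs) \<le> sum_list (map (\<lambda>_. 3) cs)"
    by (rule sum_list_mono) (simp add: weight_c_le)
  then show ?case using Proj by (simp add: sum_list_triv sum_list_csize)
next
  case (Sel c op v q)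
  then show ?case using weight_c_le[of c] by simp
qed (simp add: weight_t_le)

lemma weight_c_ge: "2 \<le> weight_c c"
  by (cases c) auto

lemma weight_t_ge: "2 \<le> weight_t t"
  by (cases t) auto

lemma weight_c_inst_mono: "weight_c c \<le> weight_c (inst_c sc c)"
  by (cases c) (auto simp: weight_c_ge)

lemma weight_t_inst_mono: "weight_t t \<le> weight_t (inst_t sc si t)"
  by (induction t) (auto simp: weight_t_ge intro: add_mono weight_c_inst_mono)

lemma weight_list_inst_mono:
  "sum_list (map weight_c cs) \<le> sum_list (map (weight_c \<circ> inst_c sc) cs)"
  by (rule sum_list_mono) (simp add: weight_c_inst_mono)

lemma weight_q_inst_mono: "weight_q q \<le> weight_q (inst_q sc si q)"
  by (induction q) (auto intro: add_mono weight_list_inst_mono weight_c_inst_mono weight_t_inst_mono)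

lemma weight_c_inst_less:
  "h \<in> chole_c c \<Longrightarrow> 2 < weight_c (sc h) \<Longrightarrow> weight_c c < weight_c (inst_c sc c)"
  by (cases c) auto

lemma weight_t_inst_less_chole:
  "h \<in> chole_t t \<Longrightarrow> 2 < weight_c (sc h) \<Longrightarrow> weight_t t < weight_t (inst_t sc si t)"
  by (induction t)
    (auto intro: add_less_le_mono add_le_less_mono add_mono weight_c_inst_less
      weight_c_inst_mono weight_t_inst_mono)

lemma weight_list_inst_less:
  "c \<in> set cs \<Longrightarrow> h \<in> chole_c c \<Longrightarrow> 2 < weight_c (sc h) \<Longrightarrow>
    sum_list (map weight_c cs) < sum_list (map (weight_c \<circ> inst_c sc) cs)"
  by (rule sum_list_strict_mono_ex1) (auto intro: weight_c_inst_mono weight_c_inst_less)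

lemma weight_q_inst_less_chole:
  "h \<in> chole_q q \<Longrightarrow> 2 < weight_c (sc h) \<Longrightarrow> weight_q q < weight_q (inst_q sc si q)"
  by (induction q)
    (auto intro: add_less_le_mono add_le_less_mono weight_list_inst_less weight_list_inst_mono
      weight_c_inst_less weight_c_inst_mono weight_q_inst_mono weight_t_inst_less_chole)

lemma weight_t_inst_less_ihole:
  "h \<in> ihole_t t \<Longrightarrow> 2 < weight_t (si h) \<Longrightarrow> weight_t t < weight_t (inst_t sc si t)"
  by (induction t) (auto intro: add_le_less_mono add_mono weight_c_inst_mono)

lemma weight_q_inst_less_ihole:
  "h \<in> ihole_q q \<Longrightarrow> 2 < weight_t (si h) \<Longrightarrow> weight_q q < weight_q (inst_q sc si q)"
  by (induction q)
    (auto intro: add_le_less_mono weight_list_inst_mono weight_c_inst_mono weight_t_inst_less_ihole)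

lemma candidates_eq:
  "candidates n m P =
     (\<lambda>(h, i). fill_col h (Col i) P) ` (chole_q P \<times> {..<m})
   \<union> (\<lambda>(h, i). fill_I h (Tab i) P) ` (ihole_q P \<times> {..<n})
   \<union> (\<lambda>(h, i). fill_I h (Join i (CHole (next_name P)) (CHole (Suc (next_name P)))
                       (IHole (Suc (Suc (next_name P))))) P) ` (ihole_q P \<times> {..<n})"
  unfolding candidates_def by auto

lemma finite_candidates: "finite (candidates n m P)"
  unfolding candidates_eq using finite_chole_q finite_ihole_q by auto

lemma card_candidates_le: "card (candidates n m P) \<le> qsize P * (m + 2 * n)"
proof -
  have "card (candidates n m P) \<le>
      card (chole_q P \<times> {..<m}) + card (ihole_q P \<times> {..<n}) + card (ihole_q P \<times> {..<n})"
    unfolding candidates_eq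
    by (rule order_trans[OF card_Un_le] add_mono order_trans[OF card_Un_le] card_image_le
        | simp add: finite_chole_q finite_ihole_q)+
  also have "\<dots> = card (chole_q P) * m + 2 * card (ihole_q P) * n"
    by (simp add: card_cartesian_product)
  also have "\<dots> \<le> qsize P * m + 2 * qsize P * n"
    using card_chole_q[of P] card_ihole_q[of P] by (intro add_mono mult_le_mono1) auto
  finally show ?thesis by (simp add: algebra_simps)
qed

lemma weight_q_candidate_less: "Q \<in> candidates n m P \<Longrightarrow> weight_q P < weight_q Q"
  unfolding candidates_def fill_col_def fill_I_def
  by (auto intro: weight_q_inst_less_chole weight_q_inst_less_ihole)

lemma derives_qsize_le: "derives P R \<Longrightarrow> qsize P \<le> qsize R"
  unfolding derives_def using qsize_inst_mono by blast

lemma derives_weight_q_le: "derives P R \<Longrightarrow> weight_q P \<le> 3 * qsize R"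
  unfolding derives_def using weight_q_inst_mono weight_q_le order_trans by blast

lemma derivable_candidate_chole:
  assumes R: "R = inst_q sc si P" and "complete R" "in_schema n m R" and h: "h \<in> chole_q P"
  shows "\<exists>Q \<in> candidates n m P. derives Q R"
proof -
  have "chole_c (sc h) = {}" "\<forall>j \<in> cols_c (sc h). j < m"
    using chole_q_inst[OF h, of sc si] cols_q_inst[OF h, of sc si] assms(2,3) R
    unfolding complete_def in_schema_def by auto
  then obtain i where i: "sc h = Col i" "i < m"
    by (cases "sc h") auto
  then have "fill_col h (Col i) P \<in> candidates n m P"
    using h unfolding candidates_def by blast
  moreover have "inst_q sc si (fill_col h (Col i) P) = R"
    using i(1) by (simp add: inst_q_fill_col R fun_upd_idem)
  ultimately show ?thesis unfolding derives_def by blast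
qed

lemma derivable_candidate_ihole:
  assumes R: "R = inst_q sc si P" and "complete R" "in_schema n m R" and h: "h \<in> ihole_q P"
  shows "\<exists>Q \<in> candidates n m P. derives Q R"
proof -
  have "ihole_t (si h) = {}" "\<forall>i \<in> tabs_t (si h). i < n"
    using ihole_q_inst[OF h, of si sc] assms(2,3) R
    unfolding complete_def in_schema_def by auto
  then consider i where "si h = Tab i" "i < n" | i c1 c2 r where "si h = Join i c1 c2 r" "i < n"
    by (cases "si h") auto
  then show ?thesis
  proof cases
    case (1 i)
    then have "fill_I h (Tab i) P \<in> candidates n m P"
      using h unfolding candidates_def by blast
    moreover have "inst_q sc si (fill_I h (Tab i) P) = R"
      using 1 by (simp add: inst_q_fill_I R fun_upd_idem)
    ultimately show ?thesis unfolding derives_def by blast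
  next
    case (2 i c1 c2 r)
    define a where "a = next_name P"
    let ?Q = "fill_I h (Join i (CHole a) (CHole (Suc a)) (IHole (Suc (Suc a)))) P"
    have "?Q \<in> candidates n m P"
      using h 2 unfolding candidates_def a_def by blast
    moreover have "inst_q (sc(a := c1, Suc a := c2)) (si(Suc (Suc a) := r)) ?Q = R"
    proof -
      have "inst_q (sc(a := c1, Suc a := c2)) (si(Suc (Suc a) := r)) ?Q =
          inst_q (sc(a := c1, Suc a := c2)) (si(Suc (Suc a) := r, h := si h)) P"
        using 2 by (simp add: inst_q_fill_I)
      also have "\<dots> = inst_q sc si P" \<comment> \<open>a, Suc a and Suc (Suc a) are fresh for P\<close>
        by (intro inst_q_cong) (auto simp: a_def dest: less_next_name[OF UnI1] less_next_name[OF UnI2])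
      finally show ?thesis using R by simp
    qed
    ultimately show ?thesis unfolding derives_def by blast
  qed
qed

lemma derivable_candidate_exists:
  assumes "derives P R" "complete R" "in_schema n m R" "\<not> complete P"
  shows "\<exists>Q \<in> candidates n m P. derives Q R"
proof -
  obtain sc si where "R = inst_q sc si P"
    using assms(1) unfolding derives_def by metis
  moreover have "chole_q P \<noteq> {} \<or> ihole_q P \<noteq> {}"
    using assms(4) unfolding complete_def by blast
  ultimately show ?thesis
    using derivable_candidate_chole[OF _ assms(2,3)] derivable_candidate_ihole[OF _ assms(2,3)] by blast
qed

(* Lexicographic in the weight deficit and the number of open candidates: the deficit is scaled
   by one more than the bound qsize R * (m + 2 * n) on the open candidates. *)
definition potential :: "nat \<Rightarrow> nat \<Rightarrow> query \<Rightarrow> query \<times> query set \<Rightarrow> nat" where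
  "potential n m R s =
     (3 * qsize R - weight_q (fst s)) * (qsize R * (m + 2 * n) + 1)
     + card (candidates n m (fst s) - snd s)"

lemma card_open_candidates_le:
  "derives P R \<Longrightarrow> card (candidates n m P - N) \<le> qsize R * (m + 2 * n)"
proof -
  assume "derives P R"
  have "card (candidates n m P - N) \<le> card (candidates n m P)"
    by (rule card_mono[OF finite_candidates Diff_subset])
  also have "\<dots> \<le> qsize P * (m + 2 * n)"
    by (rule card_candidates_le)
  also have "\<dots> \<le> qsize R * (m + 2 * n)"
    using derives_qsize_le[OF \<open>derives P R\<close>] by (rule mult_le_mono1)
  finally show ?thesis .
qed

lemma alg_step_potential_less:
  assumes d: "derives (fst s) R" and step: "alg_step n m R s s'"
  shows "derives (fst s') R \<and> potential n m R s' < potential n m R s"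
proof -
  obtain P N where s: "s = (P, N)" by fastforce
  from step obtain Q where Q: "Q \<in> candidates n m P" "Q \<notin> N"
    and s': "s' = (if derives Q R then (Q, N) else (P, insert Q N))"
    unfolding alg_step_def s by auto
  show ?thesis
  proof (cases "derives Q R")
    case True
    let ?C = "qsize R * (m + 2 * n)"
    have "weight_q P < weight_q Q" "weight_q Q \<le> 3 * qsize R"
      using weight_q_candidate_less[OF Q(1)] derives_weight_q_le[OF True] .
    have "potential n m R s' = (3 * qsize R - weight_q Q) * (?C + 1) + card (candidates n m Q - N)"
      using True s' unfolding potential_def by simp
    also have "\<dots> < (3 * qsize R - weight_q Q + 1) * (?C + 1)"
      using card_open_candidates_le[OF True, of n m N] by simp
    also have "\<dots> \<le> (3 * qsize R - weight_q P) * (?C + 1)"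
      using \<open>weight_q P < weight_q Q\<close> \<open>weight_q Q \<le> 3 * qsize R\<close>
      by (intro mult_le_mono1) linarith
    also have "\<dots> \<le> potential n m R s"
      unfolding potential_def s by simp
    finally show ?thesis
      using True s' by simp
  next
    case False
    have "card (candidates n m P - N - {Q}) < card (candidates n m P - N)"
      using Q finite_candidates by (intro card_Diff1_less) auto
    moreover have "candidates n m P - insert Q N = candidates n m P - N - {Q}"
      by blast
    ultimately have "card (candidates n m P - insert Q N) < card (candidates n m P - N)"
      by simp
    then show ?thesis
      using False s' d unfolding potential_def s by simp
  qed
qed

lemma alg_run_potential:
  "(alg_step n m R ^^ k) s0 s \<Longrightarrow> derives (fst s0) R \<Longrightarrow>
    derives (fst s) R \<and> potential n m R s + k \<le> potential n m R s0"
proof (induction k arbitrary: s)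
  case (Suc k)
  then obtain s1 where run: "(alg_step n m R ^^ k) s0 s1" and step: "alg_step n m R s1 s"
    by auto
  from Suc.IH[OF run Suc.prems(2)] alg_step_potential_less[OF _ step] show ?case
    by auto
qed simp

lemma alg_reachable_invariant:
  "(alg_step n m R)\<^sup>*\<^sup>* s0 s \<Longrightarrow> derives (fst s0) R \<Longrightarrow> \<forall>Q \<in> snd s0. \<not> derives Q R \<Longrightarrow>
    derives (fst s) R \<and> (\<forall>Q \<in> snd s. \<not> derives Q R)"
  by (induction rule: rtranclp_induct) (auto simp: alg_step_def split: if_splits)

lemma alg_step_exists:
  assumes "derives (fst s) R" "\<forall>Q \<in> snd s. \<not> derives Q R"
    and "complete R" "in_schema n m R" "\<not> complete (fst s)"
  shows "\<exists>s'. alg_step n m R s s'"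
proof -
  obtain Q where "Q \<in> candidates n m (fst s)" "derives Q R"
    using derivable_candidate_exists[OF assms(1,3-5)] by blast
  with assms(2,5) show ?thesis
    unfolding alg_step_def by blast
qed

lemma tabs_q_nonempty: "ihole_q q = {} \<Longrightarrow> tabs_q q \<noteq> {}"
proof -
  have "ihole_t t = {} \<Longrightarrow> tabs_t t \<noteq> {}" for t
    by (induction t) auto
  then show "ihole_q q = {} \<Longrightarrow> ?thesis"
    by (induction q) auto
qed

lemma potential_initial_le:
  assumes "derives P0 R" "complete R" "in_schema n m R"
  shows "potential n m R (P0, {}) \<le> 11 * (n + m) * qsize R ^ 2"
proof -
  define S where "S = qsize R"
  define T where "T = n + m"
  have "n \<noteq> 0"
    using tabs_q_nonempty[of R] assms(2,3) unfolding complete_def in_schema_def by force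
  then have "1 \<le> T" unfolding T_def by simp
  have "1 \<le> S" unfolding S_def by (cases R) auto
  have C: "S * (m + 2 * n) \<le> 2 * S * T"
    unfolding T_def by simp
  have "potential n m R (P0, {}) \<le> 3 * S * (S * (m + 2 * n) + 1) + S * (m + 2 * n)"
    using card_open_candidates_le[OF assms(1), of n m "{}"]
    unfolding potential_def S_def by (intro add_mono mult_le_mono1) auto
  also have "\<dots> \<le> 3 * S * (2 * S * T + 1) + 2 * S * T"
    using C by (intro add_mono mult_le_mono2) auto
  also have "\<dots> = 6 * T * S\<^sup>2 + 3 * S + 2 * T * S"
    by (simp add: algebra_simps power2_eq_square)
  also have "\<dots> \<le> 6 * T * S\<^sup>2 + 3 * T * S\<^sup>2 + 2 * T * S\<^sup>2"
    using \<open>1 \<le> S\<close> \<open>1 \<le> T\<close> by (intro add_mono) (auto simp: power2_eq_square)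
  finally show ?thesis
    unfolding S_def T_def by (simp add: algebra_simps)
qed

theorem theorem2:
  "\<exists>K::nat. \<forall>(n::nat) (m::nat) Pstar P0.
     complete Pstar \<longrightarrow> in_schema n m Pstar \<longrightarrow> derives P0 Pstar \<longrightarrow>
       (\<forall>k s. (alg_step n m Pstar ^^ k) (P0, {}) s \<longrightarrow> k \<le> K * (n + m) * qsize Pstar ^ 2)
     \<and> (\<forall>s. (alg_step n m Pstar)\<^sup>*\<^sup>* (P0, {}) s \<and> \<not> (\<exists>s'. alg_step n m Pstar s s')
            \<longrightarrow> complete (fst s))"
proof (intro exI[of _ 11] allI impI conjI)
  fix n m Pstar P0 k s
  assume R: "complete Pstar" "in_schema n m Pstar" and P0: "derives P0 Pstar"
    and run: "(alg_step n m Pstar ^^ k) (P0, {}) s"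
  have "k \<le> potential n m Pstar (P0, {})"
    using alg_run_potential[OF run] P0 by simp
  also have "\<dots> \<le> 11 * (n + m) * qsize Pstar ^ 2"
    using potential_initial_le[OF P0 R] .
  finally show "k \<le> 11 * (n + m) * qsize Pstar ^ 2" .
next
  fix n m Pstar P0 s
  assume R: "complete Pstar" "in_schema n m Pstar" and P0: "derives P0 Pstar"
    and "(alg_step n m Pstar)\<^sup>*\<^sup>* (P0, {}) s \<and> \<not> (\<exists>s'. alg_step n m Pstar s s')"
  then have reach: "(alg_step n m Pstar)\<^sup>*\<^sup>* (P0, {}) s" and stuck: "\<nexists>s'. alg_step n m Pstar s s'"
    by auto
  have "derives (fst s) Pstar" "\<forall>Q \<in> snd s. \<not> derives Q Pstar"
    using alg_reachable_invariant[OF reach] P0 by auto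
  with stuck show "complete (fst s)"
    using alg_step_exists[OF _ _ R] by blast
qed

end
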